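(* Let $n\geq 1$ be a natural number and let $T$ be a complete theory which is $n$-transitive and not $(n+1)$-transitive. Then $T$ is not $n$-ary.
   Context: For a natural number $m$, a complete theory $T$ is $m$-transitive if every complete type $q(x_1,\ldots,x_m)\in S(T)$ is forced (modulo $T$) by its restriction to the empty language, i.e. by the formulas of $q$ built only from equalities $x_i\approx x_j$. For $n\geq 1$, a formula of $T$ is $n$-ary if it is $T$-equivalent to a Boolean combination of $T$-formulas each having at most $n$ free variables. $T$ is unary ($1$-ary) if every $T$-formula is $T$-equivalent to a Boolean combination of $T$-formulas with one free variable and formulas $x\approx y$; for $n\geq 2$, $T$ is $n$-ary if every $T$-formula is $n$-ary. *)

theory Defs
  imports Main
begin

datatype 'f trm = Var nat | Fn 'f "'f trm list"

datatype ('f, 'r) fml =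
    Eq "'f trm" "'f trm"
  | Rel 'r "'f trm list"
  | Neg "('f, 'r) fml"
  | Conj "('f, 'r) fml" "('f, 'r) fml"
  | Ex nat "('f, 'r) fml"

fun fvt :: "'f trm \<Rightarrow> nat set" where
  "fvt (Var x) = {x}"
| "fvt (Fn f ts) = (\<Union>t\<in>set ts. fvt t)"

fun fv :: "('f, 'r) fml \<Rightarrow> nat set" where
  "fv (Eq s t) = fvt s \<union> fvt t"
| "fv (Rel r ts) = (\<Union>t\<in>set ts. fvt t)"
| "fv (Neg p) = fv p"
| "fv (Conj p q) = fv p \<union> fv q"
| "fv (Ex x p) = fv p - {x}"

fun empty_lang :: "('f, 'r) fml \<Rightarrow> bool" where
  "empty_lang (Eq (Var i) (Var j)) = True"
| "empty_lang (Eq _ _) = False"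
| "empty_lang (Rel _ _) = False"
| "empty_lang (Neg p) = empty_lang p"
| "empty_lang (Conj p q) = (empty_lang p \<and> empty_lang q)"
| "empty_lang (Ex x p) = empty_lang p"

record ('a, 'f, 'r) struc =
  dom :: "'a set"
  fns :: "'f \<Rightarrow> 'a list \<Rightarrow> 'a"
  rls :: "'r \<Rightarrow> 'a list \<Rightarrow> bool"

definition is_struc :: "('a, 'f, 'r) struc \<Rightarrow> bool" where
  "is_struc M \<longleftrightarrow> dom M \<noteq> {} \<and>
     (\<forall>f as. set as \<subseteq> dom M \<longrightarrow> fns M f as \<in> dom M)"

fun evalt :: "('a, 'f, 'r) struc \<Rightarrow> (nat \<Rightarrow> 'a) \<Rightarrow> 'f trm \<Rightarrow> 'a" where
  "evalt M e (Var x) = e x"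
| "evalt M e (Fn f ts) = fns M f (map (evalt M e) ts)"

fun sat :: "('a, 'f, 'r) struc \<Rightarrow> (nat \<Rightarrow> 'a) \<Rightarrow> ('f, 'r) fml \<Rightarrow> bool" where
  "sat M e (Eq s t) = (evalt M e s = evalt M e t)"
| "sat M e (Rel r ts) = rls M r (map (evalt M e) ts)"
| "sat M e (Neg p) = (\<not> sat M e p)"
| "sat M e (Conj p q) = (sat M e p \<and> sat M e q)"
| "sat M e (Ex x p) = (\<exists>a\<in>dom M. sat M (e(x := a)) p)"

definition assigns :: "('a, 'f, 'r) struc \<Rightarrow> (nat \<Rightarrow> 'a) set" where
  "assigns M = {e. range e \<subseteq> dom M}"

text \<open>Throughout, the complete theory T is represented as Th(M) for a structure M.
  Since T is complete, T-consequence of a sentence is truth in M, and by compactness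
  T \<union> \<Sigma>(x) \<turnstile> \<phi>(x) iff for some finite \<Sigma>0 \<subseteq> \<Sigma>, T \<turnstile> \<forall>x (\<And>\<Sigma>0 \<rightarrow> \<phi>), i.e. M satisfies this.\<close>

definition T_equiv :: "('a, 'f, 'r) struc \<Rightarrow> ('f, 'r) fml \<Rightarrow> ('f, 'r) fml \<Rightarrow> bool" where
  "T_equiv M p q \<longleftrightarrow> (\<forall>e\<in>assigns M. sat M e p = sat M e q)"

definition T_entails :: "('a, 'f, 'r) struc \<Rightarrow> ('f, 'r) fml set \<Rightarrow> ('f, 'r) fml \<Rightarrow> bool" where
  "T_entails M \<Sigma> p \<longleftrightarrow> (\<exists>\<Sigma>0. finite \<Sigma>0 \<and> \<Sigma>0 \<subseteq> \<Sigma> \<and>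
      (\<forall>e\<in>assigns M. (\<forall>q\<in>\<Sigma>0. sat M e q) \<longrightarrow> sat M e p))"

text \<open>Consistency of a set of formulas with T (T complete, compactness): finitely satisfiable in M.\<close>
definition T_consistent :: "('a, 'f, 'r) struc \<Rightarrow> ('f, 'r) fml set \<Rightarrow> bool" where
  "T_consistent M \<Sigma> \<longleftrightarrow> (\<forall>\<Sigma>0. finite \<Sigma>0 \<and> \<Sigma>0 \<subseteq> \<Sigma> \<longrightarrow>
      (\<exists>e\<in>assigns M. \<forall>q\<in>\<Sigma>0. sat M e q))"

text \<open>Complete types q(x_1,...,x_m) in S(T); the variables x_1..x_m are Var 0 .. Var (m-1).\<close>
definition complete_type :: "('a, 'f, 'r) struc \<Rightarrow> nat \<Rightarrow> ('f, 'r) fml set \<Rightarrow> bool" where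
  "complete_type M m q \<longleftrightarrow>
     (\<forall>p\<in>q. fv p \<subseteq> {..<m}) \<and> T_consistent M q \<and>
     (\<forall>p. fv p \<subseteq> {..<m} \<longrightarrow> p \<in> q \<or> Neg p \<in> q)"

definition transitive :: "('a, 'f, 'r) struc \<Rightarrow> nat \<Rightarrow> bool" where
  "transitive M m \<longleftrightarrow> (\<forall>q. complete_type M m q \<longrightarrow>
     (\<forall>p\<in>q. T_entails M {r\<in>q. empty_lang r} p))"

inductive_set bool_comb :: "('f, 'r) fml set \<Rightarrow> ('f, 'r) fml set" for B where
  base: "p \<in> B \<Longrightarrow> p \<in> bool_comb B"
| neg: "p \<in> bool_comb B \<Longrightarrow> Neg p \<in> bool_comb B"
| conj: "p \<in> bool_comb B \<Longrightarrow> q \<in> bool_comb B \<Longrightarrow> Conj p q \<in> bool_comb B"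

definition nary_fml :: "('a, 'f, 'r) struc \<Rightarrow> nat \<Rightarrow> ('f, 'r) fml \<Rightarrow> bool" where
  "nary_fml M n p \<longleftrightarrow> (\<exists>q\<in>bool_comb {r. card (fv r) \<le> n}. T_equiv M p q)"

definition nary :: "('a, 'f, 'r) struc \<Rightarrow> nat \<Rightarrow> bool" where
  "nary M n \<longleftrightarrow>
     (if n = 1 then
        (\<forall>p. \<exists>q\<in>bool_comb ({r. card (fv r) \<le> 1} \<union> {Eq (Var x) (Var y) | x y. True}).
              T_equiv M p q)
      else (\<forall>p. nary_fml M n p))"

end

theory Submission
  imports Defs
begin

(* n-transitivity says that the truth of a formula in variables x_0..x_{n-1} depends only on the
   equality pattern of the assignment.  Renaming variables extends this to every formula with at
   most n free variables, and the property is preserved by Boolean combinations and by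
   T-equivalence.  So if T were n-ary, every formula would depend only on the equality pattern of
   its assignment, and then every complete type is forced by its equality literals: T would be
   m-transitive for every m, in particular (n+1)-transitive. *)

lemma assigns_upd: "e \<in> assigns M \<Longrightarrow> a \<in> dom M \<Longrightarrow> e(x := a) \<in> assigns M"
  unfolding assigns_def by auto

lemma finite_fvt: "finite (fvt t)"
  by (induction t) auto

lemma finite_fv: "finite (fv p)"
  by (induction p) (auto simp: finite_fvt)

lemma evalt_agree: "\<forall>x\<in>fvt t. e x = e' x \<Longrightarrow> evalt M e t = evalt M e' t"
  by (induction t) (auto cong: map_cong)

lemma sat_agree: "\<forall>x\<in>fv p. e x = e' x \<Longrightarrow> sat M e p = sat M e' p"
proof (induction p arbitrary: e e')
  case (Eq s t)
  then show ?case using evalt_agree[of s e e' M] evalt_agree[of t e e' M] by simp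
next
  case (Rel r ts)
  then have "map (evalt M e) ts = map (evalt M e') ts"
    by (intro map_cong refl evalt_agree) auto
  then show ?case by (simp only: sat.simps)
next
  case (Conj p q)
  then show ?case by (metis Un_iff fv.simps(4) sat.simps(4))
next
  case (Ex x p)
  then have "sat M (e(x := a)) p = sat M (e'(x := a)) p" for a
    by (intro Ex.IH) auto
  then show ?case by simp
qed simp

fun rename_trm :: "(nat \<Rightarrow> nat) \<Rightarrow> 'f trm \<Rightarrow> 'f trm" where
  "rename_trm \<rho> (Var x) = Var (\<rho> x)"
| "rename_trm \<rho> (Fn f ts) = Fn f (map (rename_trm \<rho>) ts)"

fun rename :: "(nat \<Rightarrow> nat) \<Rightarrow> ('f, 'r) fml \<Rightarrow> ('f, 'r) fml" where
  "rename \<rho> (Eq s t) = Eq (rename_trm \<rho> s) (rename_trm \<rho> t)"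
| "rename \<rho> (Rel r ts) = Rel r (map (rename_trm \<rho>) ts)"
| "rename \<rho> (Neg p) = Neg (rename \<rho> p)"
| "rename \<rho> (Conj p q) = Conj (rename \<rho> p) (rename \<rho> q)"
| "rename \<rho> (Ex x p) = Ex (\<rho> x) (rename \<rho> p)"

lemma evalt_rename_trm: "evalt M e (rename_trm \<rho> t) = evalt M (e \<circ> \<rho>) t"
  by (induction t) (auto cong: map_cong)

lemma fvt_rename_trm: "fvt (rename_trm \<rho> t) = \<rho> ` fvt t"
  by (induction t) auto

lemma fv_rename: "inj \<rho> \<Longrightarrow> fv (rename \<rho> p) = \<rho> ` fv p"
  by (induction p) (auto simp: fvt_rename_trm image_set_diff)

lemma sat_rename: "inj \<rho> \<Longrightarrow> sat M e (rename \<rho> p) = sat M (e \<circ> \<rho>) p"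
proof (induction p arbitrary: e)
  case (Ex x p)
  have upd: "(e(\<rho> x := a)) \<circ> \<rho> = (e \<circ> \<rho>)(x := a)" for a
    using Ex.prems by (auto simp: fun_eq_iff inj_eq)
  have "sat M e (rename \<rho> (Ex x p)) = (\<exists>a\<in>dom M. sat M (e(\<rho> x := a)) (rename \<rho> p))"
    by simp
  also have "\<dots> = (\<exists>a\<in>dom M. sat M ((e(\<rho> x := a)) \<circ> \<rho>) p)"
    using Ex.IH[OF Ex.prems] by blast
  also have "\<dots> = sat M (e \<circ> \<rho>) (Ex x p)"
    unfolding upd by simp
  finally show ?case .
qed (auto simp: evalt_rename_trm comp_def)

lemma ex_inj_image_lessThan:
  assumes "finite S" "card S \<le> n"
  obtains \<rho> :: "nat \<Rightarrow> nat" where "inj \<rho>" "\<rho> ` S \<subseteq> {..<n}"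
proof -
  obtain g where g: "bij_betw g S {..<card S}"
    using assms(1) ex_bij_betw_finite_nat atLeast0LessThan by metis
  then have g_less: "g x < n" if "x \<in> S" for x
    using assms(2) that bij_betwE by fastforce
  define \<rho> where "\<rho> x = (if x \<in> S then g x else n + x)" for x
  have "inj \<rho>"
  proof (rule injI)
    fix x y assume "\<rho> x = \<rho> y"
    then show "x = y"
      using inj_onD[OF bij_betw_imp_inj_on[OF g]] g_less[of x] g_less[of y]
      unfolding \<rho>_def by (auto split: if_splits)
  qed
  moreover have "\<rho> ` S \<subseteq> {..<n}"
    using g_less by (auto simp: \<rho>_def)
  ultimately show ?thesis by (rule that)
qed

definition same_eq_pattern :: "(nat \<Rightarrow> 'a) \<Rightarrow> (nat \<Rightarrow> 'a) \<Rightarrow> nat set \<Rightarrow> bool" where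
  "same_eq_pattern e e' F \<longleftrightarrow> (\<forall>i\<in>F. \<forall>j\<in>F. e i = e j \<longleftrightarrow> e' i = e' j)"

lemma same_eq_pattern_sym: "same_eq_pattern e e' F \<Longrightarrow> same_eq_pattern e' e F"
  unfolding same_eq_pattern_def by blast

lemma same_eq_pattern_subset: "same_eq_pattern e e' F \<Longrightarrow> G \<subseteq> F \<Longrightarrow> same_eq_pattern e e' G"
  unfolding same_eq_pattern_def by blast

lemma card_image_le_same_eq_pattern:
  assumes "same_eq_pattern e e' G" "finite G"
  shows "card (e' ` G) \<le> card (e ` G)"
proof -
  have "e' ` G = (\<lambda>v. e' (inv_into G e v)) ` (e ` G)"
  proof (intro equalityI subsetI)
    fix y assume "y \<in> e' ` G"
    then obtain i where i: "i \<in> G" "y = e' i" by blast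
    then have "inv_into G e (e i) \<in> G" "e (inv_into G e (e i)) = e i"
      by (auto intro: inv_into_into f_inv_into_f)
    then show "y \<in> (\<lambda>v. e' (inv_into G e v)) ` (e ` G)"
      using assms(1) i unfolding same_eq_pattern_def by (metis imageI)
  qed (auto intro: inv_into_into)
  then show ?thesis
    using assms(2) by (metis card_image_le finite_imageI)
qed

lemma card_image_same_eq_pattern:
  "same_eq_pattern e e' G \<Longrightarrow> finite G \<Longrightarrow> card (e' ` G) = card (e ` G)"
  using card_image_le_same_eq_pattern same_eq_pattern_sym by (metis le_antisym)

text \<open>A new value for x that is fresh for e on F can be matched by a value fresh for e':
  in an infinite domain trivially, in a finite one because e and e' use equally many values.\<close>

lemma same_eq_pattern_extend:
  assumes "finite F" "e \<in> assigns M" "e' \<in> assigns M" "same_eq_pattern e e' (F - {x})"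
    and "a \<in> dom M"
  obtains a' where "a' \<in> dom M" "same_eq_pattern (e(x := a)) (e'(x := a')) F"
proof (cases "\<exists>j\<in>F - {x}. e j = a")
  case True
  then obtain j where j: "j \<in> F - {x}" "e j = a" by blast
  have "e' j \<in> dom M" using assms(3) unfolding assigns_def by auto
  moreover have "same_eq_pattern (e(x := a)) (e'(x := e' j)) F"
    using assms(4) j unfolding same_eq_pattern_def by auto
  ultimately show ?thesis by (rule that)
next
  case False
  define G where "G = F - {x}"
  have "finite G" using assms(1) G_def by auto
  have ranges: "e ` G \<subseteq> dom M" "e' ` G \<subseteq> dom M"
    using assms(2,3) unfolding assigns_def by auto
  have a_fresh: "a \<notin> e ` G" using False G_def by auto
  have "\<exists>a'. a' \<in> dom M - e' ` G"
  proof (cases "finite (dom M)")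
    case True
    have "card (e ` G) < card (dom M)"
      using True ranges a_fresh assms(5) by (intro psubset_card_mono) auto
    then have "card (e' ` G) < card (dom M)"
      using card_image_same_eq_pattern[OF assms(4)[folded G_def] \<open>finite G\<close>] by simp
    then have "\<not> dom M \<subseteq> e' ` G" using \<open>finite G\<close> card_mono[of "e' ` G" "dom M"] by auto
    then show ?thesis by blast
  next
    case False
    then have "infinite (dom M - e' ` G)" using \<open>finite G\<close> by (intro Diff_infinite_finite) auto
    then show ?thesis by (metis ex_in_conv finite.emptyI)
  qed
  then obtain a' where a': "a' \<in> dom M" "a' \<notin> e' ` G" by blast
  have "same_eq_pattern (e(x := a)) (e'(x := a')) F"
    using assms(4) a_fresh a' unfolding same_eq_pattern_def G_def by auto
  with a' show ?thesis using that by blast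
qed

lemma sat_empty_lang_same_eq_pattern:
  "empty_lang p \<Longrightarrow> e \<in> assigns M \<Longrightarrow> e' \<in> assigns M \<Longrightarrow> same_eq_pattern e e' (fv p) \<Longrightarrow>
   sat M e p = sat M e' p"
proof (induction p arbitrary: e e')
  case (Eq s t)
  then obtain i j where "s = Var i" "t = Var j"
    by (cases s; cases t) auto
  then show ?case using Eq.prems unfolding same_eq_pattern_def by auto
next
  case (Conj p q)
  then show ?case using same_eq_pattern_subset[of e e' "fv (Conj p q)"] by auto
next
  case (Ex x p)
  have witness_transfer: "sat M e2 (Ex x p)"
    if "sat M e1 (Ex x p)" and e12: "e1 \<in> assigns M" "e2 \<in> assigns M"
      "same_eq_pattern e1 e2 (fv p - {x})" for e1 e2
  proof -
    from that(1) obtain a where a: "a \<in> dom M" "sat M (e1(x := a)) p" by auto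
    obtain a' where a': "a' \<in> dom M" "same_eq_pattern (e1(x := a)) (e2(x := a')) (fv p)"
      using same_eq_pattern_extend[OF finite_fv e12 a(1)] by blast
    have "sat M (e1(x := a)) p = sat M (e2(x := a')) p"
      using Ex.IH[OF _ assigns_upd[OF e12(1) a(1)] assigns_upd[OF e12(2) a'(1)] a'(2)]
        Ex.prems(1) by (simp add: fun_upd_def)
    then show ?thesis using a a'(1) by auto
  qed
  have "same_eq_pattern e e' (fv p - {x})" "same_eq_pattern e' e (fv p - {x})"
    using Ex.prems same_eq_pattern_sym by auto
  then show ?case
    using witness_transfer[of e e'] witness_transfer[of e' e] Ex.prems by blast
qed auto

definition pattern_invariant :: "('a, 'f, 'r) struc \<Rightarrow> ('f, 'r) fml \<Rightarrow> bool" where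
  "pattern_invariant M p \<longleftrightarrow> (\<forall>e\<in>assigns M. \<forall>e'\<in>assigns M.
     same_eq_pattern e e' UNIV \<longrightarrow> sat M e p = sat M e' p)"

lemma pattern_invariant_Eq_Var: "pattern_invariant M (Eq (Var x) (Var y))"
  unfolding pattern_invariant_def same_eq_pattern_def by auto

lemma pattern_invariant_bool_comb:
  "q \<in> bool_comb B \<Longrightarrow> (\<And>r. r \<in> B \<Longrightarrow> pattern_invariant M r) \<Longrightarrow> pattern_invariant M q"
  by (induction rule: bool_comb.induct) (auto simp: pattern_invariant_def)

lemma pattern_invariant_T_equiv:
  "T_equiv M p q \<Longrightarrow> pattern_invariant M q \<Longrightarrow> pattern_invariant M p"
  unfolding T_equiv_def pattern_invariant_def by auto

lemma pattern_invariant_rename: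
  assumes "inj \<rho>" "pattern_invariant M (rename \<rho> p)"
  shows "pattern_invariant M p"
  unfolding pattern_invariant_def
proof (intro ballI impI)
  fix e e' assume e: "e \<in> assigns M" "e' \<in> assigns M" "same_eq_pattern e e' UNIV"
  have inv_cancel: "f \<circ> inv \<rho> \<circ> \<rho> = f" for f :: "nat \<Rightarrow> 'a"
    using assms(1) by (auto simp: fun_eq_iff)
  have "e \<circ> inv \<rho> \<in> assigns M" "e' \<circ> inv \<rho> \<in> assigns M"
    using e(1,2) unfolding assigns_def by auto
  moreover have "same_eq_pattern (e \<circ> inv \<rho>) (e' \<circ> inv \<rho>) UNIV"
    using e(3) unfolding same_eq_pattern_def by auto
  ultimately have "sat M (e \<circ> inv \<rho>) (rename \<rho> p) = sat M (e' \<circ> inv \<rho>) (rename \<rho> p)"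
    using assms(2) unfolding pattern_invariant_def by blast
  then show "sat M e p = sat M e' p"
    unfolding sat_rename[OF assms(1)] inv_cancel .
qed

text \<open>Collapsing both assignments onto their value at 0 outside the segment {..<m} turns the
  pattern on the segment into a pattern on all variables without changing the truth value.\<close>

lemma pattern_invariant_sat_eq:
  assumes "pattern_invariant M p" "fv p \<subseteq> {..<m}"
    and "e \<in> assigns M" "e' \<in> assigns M" "same_eq_pattern e e' {..<m}"
  shows "sat M e p = sat M e' p"
proof -
  define collapse where "collapse f x = (if x < m then f x else f 0)" for f :: "nat \<Rightarrow> 'a" and x
  have "collapse e \<in> assigns M" "collapse e' \<in> assigns M"
    using assms(3,4) unfolding assigns_def collapse_def by auto
  moreover have "same_eq_pattern (collapse e) (collapse e') UNIV"
    using assms(5) unfolding same_eq_pattern_def collapse_def by auto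
  moreover have "sat M (collapse f) p = sat M f p" for f
    using assms(2) by (intro sat_agree) (auto simp: collapse_def)
  ultimately show ?thesis
    using assms(1) unfolding pattern_invariant_def by metis
qed

lemma complete_type_realized:
  "e \<in> assigns M \<Longrightarrow> complete_type M m {p. fv p \<subseteq> {..<m} \<and> sat M e p}"
  unfolding complete_type_def T_consistent_def by auto

lemma transitive_pattern_invariant_lessThan:
  assumes "transitive M n" "fv p \<subseteq> {..<n}"
  shows "pattern_invariant M p"
proof -
  have "sat M e' p" if e: "e \<in> assigns M" "e' \<in> assigns M" "same_eq_pattern e e' UNIV"
    and "sat M e p" for e e'
  proof -
    define q where "q = {p. fv p \<subseteq> {..<n} \<and> sat M e p}"
    have "p \<in> q" using assms(2) \<open>sat M e p\<close> q_def by auto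
    then have "T_entails M {r\<in>q. empty_lang r} p"
      using assms(1) complete_type_realized[OF e(1)] unfolding transitive_def q_def by blast
    then obtain S0 where S0: "S0 \<subseteq> {r\<in>q. empty_lang r}"
      "\<forall>e\<in>assigns M. (\<forall>r\<in>S0. sat M e r) \<longrightarrow> sat M e p"
      unfolding T_entails_def by blast
    have "sat M e' r" if "r \<in> S0" for r
      using that S0(1) sat_empty_lang_same_eq_pattern[OF _ e(1,2)]
        same_eq_pattern_subset[OF e(3)] unfolding q_def by blast
    then show ?thesis using S0(2) e(2) by blast
  qed
  then show ?thesis unfolding pattern_invariant_def using same_eq_pattern_sym by metis
qed

lemma transitive_pattern_invariant:
  assumes "transitive M n" "card (fv p) \<le> n"
  shows "pattern_invariant M p"
proof -
  obtain \<rho> where \<rho>: "inj \<rho>" "\<rho> ` fv p \<subseteq> {..<n}"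
    using ex_inj_image_lessThan[OF finite_fv assms(2)] .
  then have "fv (rename \<rho> p) \<subseteq> {..<n}" by (simp add: fv_rename)
  then have "pattern_invariant M (rename \<rho> p)"
    by (rule transitive_pattern_invariant_lessThan[OF assms(1)])
  with \<rho>(1) show ?thesis by (rule pattern_invariant_rename)
qed

lemma nary_transitive_pattern_invariant:
  assumes "transitive M n" "nary M n"
  shows "pattern_invariant M p"
proof -
  have from_basis: "pattern_invariant M p"
    if "q \<in> bool_comb B" "T_equiv M p q" "\<And>r. r \<in> B \<Longrightarrow> pattern_invariant M r" for q B
    using that pattern_invariant_bool_comb pattern_invariant_T_equiv by blast
  show ?thesis
  proof (cases "n = 1")
    case True
    then obtain q where "q \<in> bool_comb ({r. card (fv r) \<le> 1} \<union> {Eq (Var x) (Var y) | x y. True})"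
      "T_equiv M p q"
      using assms(2) unfolding nary_def by auto
    then show ?thesis
      using True transitive_pattern_invariant[OF assms(1)] pattern_invariant_Eq_Var
      by (auto intro!: from_basis)
  next
    case False
    then obtain q where "q \<in> bool_comb {r. card (fv r) \<le> n}" "T_equiv M p q"
      using assms(2) unfolding nary_def nary_fml_def by auto
    then show ?thesis
      using transitive_pattern_invariant[OF assms(1)] by (auto intro!: from_basis)
  qed
qed

definition eq_literals :: "nat \<Rightarrow> ('f, 'r) fml set" where
  "eq_literals m = (\<Union>i<m. \<Union>j<m. {Eq (Var i) (Var j), Neg (Eq (Var i) (Var j))})"

lemma finite_eq_literals: "finite (eq_literals m)"
  unfolding eq_literals_def by simp

lemma empty_lang_eq_literals: "r \<in> eq_literals m \<Longrightarrow> empty_lang r"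
  unfolding eq_literals_def by auto

lemma eq_literals_complete_type:
  assumes "complete_type M m q" "i < m" "j < m"
  shows "Eq (Var i) (Var j) \<in> q \<inter> eq_literals m \<or> Neg (Eq (Var i) (Var j)) \<in> q \<inter> eq_literals m"
proof -
  have "fv (Eq (Var i) (Var j) :: ('f, 'r) fml) \<subseteq> {..<m}" using assms(2,3) by simp
  then have "Eq (Var i) (Var j) \<in> q \<or> Neg (Eq (Var i) (Var j)) \<in> q"
    using assms(1) unfolding complete_type_def by blast
  then show ?thesis using assms(2,3) unfolding eq_literals_def by blast
qed

text \<open>The equality literals of a complete type fix the equality pattern of each of its
  realizations on x_0..x_{m-1}.\<close>

lemma pattern_invariant_transitive:
  assumes "\<And>p. pattern_invariant M p"
  shows "transitive M m"
  unfolding transitive_def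
proof (intro allI impI ballI)
  fix q p assume q: "complete_type M m q" and "p \<in> q"
  define S0 where "S0 = q \<inter> eq_literals m"
  have S0: "finite S0" "S0 \<subseteq> {r\<in>q. empty_lang r}"
    using finite_eq_literals empty_lang_eq_literals unfolding S0_def by auto
  have "sat M e p" if e: "e \<in> assigns M" "\<forall>r\<in>S0. sat M e r" for e
  proof -
    have "finite (insert p S0)" "insert p S0 \<subseteq> q"
      using S0 \<open>p \<in> q\<close> by auto
    then obtain e0 where e0: "e0 \<in> assigns M" "\<forall>r\<in>insert p S0. sat M e0 r"
      using q unfolding complete_type_def T_consistent_def by (metis (no_types, lifting))
    have "e0 i = e0 j \<longleftrightarrow> e i = e j" if "i < m" "j < m" for i j
    proof -
      have "Eq (Var i) (Var j) \<in> S0 \<or> Neg (Eq (Var i) (Var j)) \<in> S0"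
        using eq_literals_complete_type[OF q that] unfolding S0_def .
      then show ?thesis
        using e(2) e0(2) by (metis insert_iff sat.simps(1,3) evalt.simps(1))
    qed
    then have "same_eq_pattern e0 e {..<m}"
      unfolding same_eq_pattern_def by simp
    moreover have "fv p \<subseteq> {..<m}" using q \<open>p \<in> q\<close> unfolding complete_type_def by auto
    ultimately show ?thesis
      using pattern_invariant_sat_eq[OF assms] e(1) e0 by blast
  qed
  then show "T_entails M {r\<in>q. empty_lang r} p"
    unfolding T_entails_def using S0 by blast
qed

theorem proposition1p6:
  fixes M :: "('a, 'f, 'r) struc" and n :: nat
  assumes "is_struc M"
    and "n \<ge> 1"
    and "transitive M n"
    and "\<not> transitive M (n + 1)"
  shows "\<not> nary M n"
proof
  assume "nary M n"
  then have "pattern_invariant M p" for p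
    using assms(3) nary_transitive_pattern_invariant by blast
  then have "transitive M (n + 1)"
    by (rule pattern_invariant_transitive)
  with assms(4) show False by contradiction
qed

end
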